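(* Let $E=(E^0,E^1,r,s)$ be a graph. If $E$ has no cycles and $E$ has a countable (finite or countably infinite) number of shift-tail equivalence classes of boundary paths, then $E$ contains a line point.
   Context: A graph $E=(E^0,E^1,r,s)$ has vertex set $E^0$, edge set $E^1$, range and source maps. A cycle is a path $e_1\cdots e_n$ ($n\ge1$, $r(e_i)=s(e_{i+1})$) with $s(e_1)=r(e_n)$. A vertex is singular if it emits no edges or infinitely many edges. Boundary paths: infinite paths $e_1e_2\cdots$ together with finite paths (including vertices as length-$0$ paths) whose range is singular. The shift $\sigma_E$ removes the first edge (fixes vertices; sends a single edge $e$ to $r(e)$); boundary paths $\alpha,\beta$ are shift-tail equivalent if $\sigma_E^m(\alpha)=\sigma_E^n(\beta)$ for some $m,n\in\mathbb{N}$. For $v\in E^0$, $T(v)$ is the set of vertices reachable from $v$ by a path (including $v$). A bifurcation vertex emits at least two edges. $v$ is a line point if $T(v)$ contains no bifurcation vertex and no vertex of $T(v)$ lies on a cycle. *)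

theory Defs
  imports Main "HOL-Library.Countable_Set"
begin

text \<open>A directed graph E = (E0, E1, r, s): vertex set V, edge set Ed, range r, source s.\<close>

definition graph :: "'v set \<Rightarrow> 'e set \<Rightarrow> ('e \<Rightarrow> 'v) \<Rightarrow> ('e \<Rightarrow> 'v) \<Rightarrow> bool" where
  "graph V Ed r s \<longleftrightarrow> (\<forall>e\<in>Ed. r e \<in> V \<and> s e \<in> V)"

definition fpath :: "'e set \<Rightarrow> ('e \<Rightarrow> 'v) \<Rightarrow> ('e \<Rightarrow> 'v) \<Rightarrow> 'e list \<Rightarrow> bool" where
  "fpath Ed r s es \<longleftrightarrow> es \<noteq> [] \<and> set es \<subseteq> Ed \<and>
     (\<forall>i. Suc i < length es \<longrightarrow> r (es ! i) = s (es ! Suc i))"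

definition ipath :: "'e set \<Rightarrow> ('e \<Rightarrow> 'v) \<Rightarrow> ('e \<Rightarrow> 'v) \<Rightarrow> (nat \<Rightarrow> 'e) \<Rightarrow> bool" where
  "ipath Ed r s f \<longleftrightarrow> (\<forall>n. f n \<in> Ed \<and> r (f n) = s (f (Suc n)))"

definition is_cycle :: "'e set \<Rightarrow> ('e \<Rightarrow> 'v) \<Rightarrow> ('e \<Rightarrow> 'v) \<Rightarrow> 'e list \<Rightarrow> bool" where
  "is_cycle Ed r s es \<longleftrightarrow> fpath Ed r s es \<and> s (hd es) = r (last es)"

definition singular :: "'e set \<Rightarrow> ('e \<Rightarrow> 'v) \<Rightarrow> 'v \<Rightarrow> bool" where
  "singular Ed s v \<longleftrightarrow> {e\<in>Ed. s e = v} = {} \<or> infinite {e\<in>Ed. s e = v}"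

text \<open>Paths: vertices (length 0), nonempty finite edge lists, infinite edge sequences.\<close>
datatype ('v, 'e) gpath = PVert 'v | PFin "'e list" | PInf "nat \<Rightarrow> 'e"

definition boundary_paths :: "'v set \<Rightarrow> 'e set \<Rightarrow> ('e \<Rightarrow> 'v) \<Rightarrow> ('e \<Rightarrow> 'v) \<Rightarrow> ('v, 'e) gpath set" where
  "boundary_paths V Ed r s =
     {PVert v | v. v \<in> V \<and> singular Ed s v}
   \<union> {PFin es | es. fpath Ed r s es \<and> singular Ed s (r (last es))}
   \<union> {PInf f | f. ipath Ed r s f}"

fun shift :: "('e \<Rightarrow> 'v) \<Rightarrow> ('v, 'e) gpath \<Rightarrow> ('v, 'e) gpath" where
  "shift r (PVert v) = PVert v"
| "shift r (PFin []) = PFin []"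
| "shift r (PFin [e]) = PVert (r e)"
| "shift r (PFin (e # e' # es)) = PFin (e' # es)"
| "shift r (PInf f) = PInf (\<lambda>n. f (Suc n))"

definition tail_equiv :: "'v set \<Rightarrow> 'e set \<Rightarrow> ('e \<Rightarrow> 'v) \<Rightarrow> ('e \<Rightarrow> 'v) \<Rightarrow> ('v, 'e) gpath rel" where
  "tail_equiv V Ed r s = {(\<alpha>, \<beta>). \<alpha> \<in> boundary_paths V Ed r s \<and> \<beta> \<in> boundary_paths V Ed r s \<and>
      (\<exists>m n. (shift r ^^ m) \<alpha> = (shift r ^^ n) \<beta>)}"

definition T :: "'v set \<Rightarrow> 'e set \<Rightarrow> ('e \<Rightarrow> 'v) \<Rightarrow> ('e \<Rightarrow> 'v) \<Rightarrow> 'v \<Rightarrow> 'v set" where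
  "T V Ed r s v = {w. (w = v \<and> v \<in> V) \<or>
      (\<exists>es. fpath Ed r s es \<and> s (hd es) = v \<and> r (last es) = w)}"

definition bifurcation :: "'e set \<Rightarrow> ('e \<Rightarrow> 'v) \<Rightarrow> 'v \<Rightarrow> bool" where
  "bifurcation Ed s v \<longleftrightarrow> (\<exists>e1\<in>Ed. \<exists>e2\<in>Ed. e1 \<noteq> e2 \<and> s e1 = v \<and> s e2 = v)"

definition on_cycle :: "'e set \<Rightarrow> ('e \<Rightarrow> 'v) \<Rightarrow> ('e \<Rightarrow> 'v) \<Rightarrow> 'v \<Rightarrow> bool" where
  "on_cycle Ed r s v \<longleftrightarrow> (\<exists>es. is_cycle Ed r s es \<and> v \<in> s ` set es)"

definition line_point :: "'v set \<Rightarrow> 'e set \<Rightarrow> ('e \<Rightarrow> 'v) \<Rightarrow> ('e \<Rightarrow> 'v) \<Rightarrow> 'v \<Rightarrow> bool" where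
  "line_point V Ed r s v \<longleftrightarrow> v \<in> V \<and>
     (\<forall>w\<in>T V Ed r s v. \<not> bifurcation Ed s w \<and> \<not> on_cycle Ed r s w)"

end

theory Submission
  imports Defs
begin

text \<open>Without line points and without cycles, every vertex reaches a bifurcation vertex. So from
  any vertex an infinite path can be steered by a bit sequence x: at the k-th bifurcation vertex
  met, leave along one of two fixed distinct edges according to x k. Distinct sequences give
  distinct paths, and the first n edges depend only on the first n bits. Hence the paths of
  a tail-equivalence class come from only countably many sequences, and since there are
  uncountably many sequences there are uncountably many classes.\<close>

lemma uncountable_bit_sequences: "uncountable (UNIV :: (nat \<Rightarrow> bool) set)"
proof
  assume "countable (UNIV :: (nat \<Rightarrow> bool) set)"
  then obtain f :: "nat \<Rightarrow> nat \<Rightarrow> bool" where "range f = UNIV"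
    using uncountable_def by blast
  then obtain n where "(\<lambda>k. \<not> f k k) = f n"
    by (metis rangeE UNIV_I)
  then have "(\<not> f n n) = f n n"
    by (rule fun_cong)
  then show False by simp
qed

lemma fpath_Cons:
  "fpath Ed r s (e # es) \<longleftrightarrow> e \<in> Ed \<and> (es = [] \<or> fpath Ed r s es \<and> r e = s (hd es))"
  by (cases es) (auto simp: fpath_def nth_Cons split: nat.splits)

lemma out_edge_unique_if_not_bifurcation:
  "\<not> bifurcation Ed s u \<Longrightarrow> e \<in> Ed \<Longrightarrow> e' \<in> Ed \<Longrightarrow> s e = u \<Longrightarrow> s e' = u \<Longrightarrow> e = e'"
  by (auto simp: bifurcation_def)

lemma out_edge_if_reaches_bifurcation:
  assumes "w \<in> T V Ed r s u" and "bifurcation Ed s w"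
  shows "\<exists>e\<in>Ed. s e = u"
  using assms hd_in_set by (fastforce simp: T_def bifurcation_def fpath_def)

lemma reaches_bifurcation_if_not_line_point:
  assumes "\<not> (\<exists>es. is_cycle Ed r s es)" and "u \<in> V" and "\<not> line_point V Ed r s u"
  shows "\<exists>w\<in>T V Ed r s u. bifurcation Ed s w"
  using assms by (auto simp: line_point_def on_cycle_def)

lemma out_edge_selector_exists:
  assumes "\<And>u. u \<in> V \<Longrightarrow> \<exists>e\<in>Ed. s e = u"
  obtains out :: "'v \<Rightarrow> bool \<Rightarrow> 'e" where
    "\<And>u b. u \<in> V \<Longrightarrow> out u b \<in> Ed \<and> s (out u b) = u"
    "\<And>u. u \<in> V \<Longrightarrow> bifurcation Ed s u \<Longrightarrow> out u True \<noteq> out u False"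
proof -
  have "\<forall>u\<in>V. \<exists>p. (\<forall>b. p b \<in> Ed \<and> s (p b) = u) \<and> (bifurcation Ed s u \<longrightarrow> p True \<noteq> p False)"
  proof
    fix u assume "u \<in> V"
    show "\<exists>p. (\<forall>b. p b \<in> Ed \<and> s (p b) = u) \<and> (bifurcation Ed s u \<longrightarrow> p True \<noteq> p False)"
    proof (cases "bifurcation Ed s u")
      case True
      then obtain e1 e2 where "e1 \<in> Ed" "e2 \<in> Ed" "e1 \<noteq> e2" "s e1 = u" "s e2 = u"
        by (auto simp: bifurcation_def)
      then show ?thesis by (intro exI[of _ "\<lambda>b. if b then e1 else e2"]) auto
    next
      case False
      obtain e where "e \<in> Ed" "s e = u" using assms \<open>u \<in> V\<close> by blast
      then show ?thesis using False by (intro exI[of _ "\<lambda>_. e"]) auto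
    qed
  qed
  from bchoice[OF this] show ?thesis using that by blast
qed

definition causal :: "((nat \<Rightarrow> bool) \<Rightarrow> nat \<Rightarrow> 'a) \<Rightarrow> bool" where
  "causal f \<longleftrightarrow> (\<forall>x y m n. (\<forall>i<m. x i = y i) \<longrightarrow> n < m \<longrightarrow> f x n = f y n)"

lemma countable_tail_fibre:
  fixes f :: "(nat \<Rightarrow> bool) \<Rightarrow> nat \<Rightarrow> 'a"
  assumes "inj f" and "causal f"
  shows "countable {x. \<forall>k. f x (k + n) = g k}"
proof (rule countable_image_inj_on)
  show "countable ((\<lambda>x. map x [0..<n]) ` {x. \<forall>k. f x (k + n) = g k})"
    by (rule countable_subset[OF subset_UNIV countableI_type])
  show "inj_on (\<lambda>x. map x [0..<n]) {x. \<forall>k. f x (k + n) = g k}"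
  proof (rule inj_onI)
    fix x y
    assume x: "x \<in> {x. \<forall>k. f x (k + n) = g k}" and y: "y \<in> {x. \<forall>k. f x (k + n) = g k}"
      and "map x [0..<n] = map y [0..<n]"
    then have prefix: "\<forall>i<n. x i = y i" by simp
    have "f x k = f y k" for k
    proof (cases "k < n")
      case True
      then show ?thesis using \<open>causal f\<close> prefix by (auto simp: causal_def)
    next
      case False
      have "f x ((k - n) + n) = f y ((k - n) + n)" using x y by simp
      then show ?thesis using False by simp
    qed
    then have "f x = f y" by (rule ext)
    then show "x = y" by (rule injD[OF \<open>inj f\<close>])
  qed
qed

lemma shift_pow_PInf: "(shift r ^^ m) (PInf f) = PInf (\<lambda>k. f (k + m))"
  by (induction m) auto

lemma tail_equiv_PInfD:
  "(PInf f, PInf g) \<in> tail_equiv V Ed r s \<Longrightarrow> \<exists>m n. \<forall>k. f (k + m) = g (k + n)"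
  by (auto simp: tail_equiv_def shift_pow_PInf fun_eq_iff)

lemma uncountable_tail_classes_if_causal_inj_paths:
  fixes f :: "(nat \<Rightarrow> bool) \<Rightarrow> nat \<Rightarrow> 'e"
  assumes ipath: "\<And>x. ipath Ed r s (f x)"
    and "inj f" and "causal f"
  shows "uncountable (boundary_paths V Ed r s // tail_equiv V Ed r s)"
proof
  assume countable_classes: "countable (boundary_paths V Ed r s // tail_equiv V Ed r s)"
  define cls where "cls x = tail_equiv V Ed r s `` {PInf (f x)}" for x
  have boundary: "PInf (f x) \<in> boundary_paths V Ed r s" for x
    using ipath by (auto simp: boundary_paths_def)
  have "range cls \<subseteq> boundary_paths V Ed r s // tail_equiv V Ed r s"
    using boundary by (auto simp: cls_def intro: quotientI)
  then have countable_range: "countable (range cls)"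
    using countable_classes countable_subset by blast
  have fibre: "cls -` {cls x0} \<subseteq> (\<Union>m. \<Union>n. {x. \<forall>k. f x (k + n) = f x0 (k + m)})" for x0
  proof
    fix x assume "x \<in> cls -` {cls x0}"
    moreover have "PInf (f x) \<in> cls x"
      using boundary by (auto simp: cls_def tail_equiv_def intro!: exI[of _ 0])
    ultimately have "(PInf (f x0), PInf (f x)) \<in> tail_equiv V Ed r s"
      by (simp add: cls_def)
    then obtain m n where "\<forall>k. f x0 (k + m) = f x (k + n)"
      by (blast dest: tail_equiv_PInfD)
    then have "x \<in> {x. \<forall>k. f x (k + n) = f x0 (k + m)}" by simp
    then show "x \<in> (\<Union>m. \<Union>n. {x. \<forall>k. f x (k + n) = f x0 (k + m)})" by blast
  qed
  have fibre_countable: "countable {x. \<forall>k. f x (k + n) = g k}" for n g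
    using countable_tail_fibre[OF \<open>inj f\<close> \<open>causal f\<close>] .
  have "countable (\<Union>c\<in>range cls. cls -` {c})"
  proof (rule countable_UN[OF countable_range])
    fix c assume "c \<in> range cls"
    then obtain x0 where "c = cls x0" by blast
    moreover have "countable (cls -` {cls x0})"
      by (rule countable_subset[OF fibre]) (intro countable_UN countableI_type fibre_countable)
    ultimately show "countable (cls -` {c})" by simp
  qed
  moreover have "(\<Union>c\<in>range cls. cls -` {c}) = UNIV" by blast
  ultimately show False using uncountable_bit_sequences by simp
qed

locale bifurcating_walk =
  fixes V :: "'v set" and Ed :: "'e set" and r s :: "'e \<Rightarrow> 'v"
    and v0 :: 'v and out :: "'v \<Rightarrow> bool \<Rightarrow> 'e"
  assumes graph: "graph V Ed r s"
    and start: "v0 \<in> V"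
    and out_edge: "\<And>u b. u \<in> V \<Longrightarrow> out u b \<in> Ed \<and> s (out u b) = u"
    and out_branches: "\<And>u. u \<in> V \<Longrightarrow> bifurcation Ed s u \<Longrightarrow> out u True \<noteq> out u False"
    and reaches_bifurcation: "\<And>u. u \<in> V \<Longrightarrow> \<exists>w\<in>T V Ed r s u. bifurcation Ed s w"
begin

text \<open>The walk steered by x reads bit x k at its k-th bifurcation vertex; at any other vertex
  out u True = out u False is the unique out-edge, so no bit is consumed there.\<close>
fun position :: "(nat \<Rightarrow> bool) \<Rightarrow> nat \<Rightarrow> 'v"
  and bits_read :: "(nat \<Rightarrow> bool) \<Rightarrow> nat \<Rightarrow> nat" where
  "position x 0 = v0"
| "position x (Suc n) = r (out (position x n) (x (bits_read x n)))"
| "bits_read x 0 = 0"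
| "bits_read x (Suc n) =
     (if bifurcation Ed s (position x n) then Suc (bits_read x n) else bits_read x n)"

definition walk_path :: "(nat \<Rightarrow> bool) \<Rightarrow> nat \<Rightarrow> 'e" where
  "walk_path x n = out (position x n) (x (bits_read x n))"

lemma position_in_V: "position x n \<in> V"
  using graph start out_edge by (induction n) (auto simp: graph_def)

lemma walk_path_edge: "walk_path x n \<in> Ed \<and> s (walk_path x n) = position x n"
  using out_edge position_in_V by (simp add: walk_path_def)

lemma position_Suc: "position x (Suc n) = r (walk_path x n)"
  by (simp add: walk_path_def)

lemma ipath_walk_path: "ipath Ed r s (walk_path x)"
  unfolding ipath_def
proof (intro allI conjI)
  fix n
  show "walk_path x n \<in> Ed" using walk_path_edge by blast
  show "r (walk_path x n) = s (walk_path x (Suc n))"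
    by (simp only: conjunct2[OF walk_path_edge] position_Suc)
qed

lemma bits_read_le: "bits_read x n \<le> n"
  by (induction n) auto

lemma walk_eq_if_prefix_eq:
  assumes "\<forall>i<m. x i = y i" and "n \<le> m"
  shows "position x n = position y n \<and> bits_read x n = bits_read y n"
  using assms(2)
proof (induction n)
  case (Suc n)
  then have "x (bits_read x n) = y (bits_read x n)"
    using assms(1) bits_read_le[of x n] by simp
  with Suc show ?case by simp
qed simp

lemma causal_walk_path: "causal walk_path"
  unfolding causal_def
proof (intro allI impI)
  fix x y :: "nat \<Rightarrow> bool" and m n :: nat
  assume "\<forall>i<m. x i = y i" and "n < m"
  then have "position x n = position y n" "bits_read x n = bits_read y n"
    and "x (bits_read x n) = y (bits_read x n)"
    using walk_eq_if_prefix_eq[of m x y n] bits_read_le[of x n] by auto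
  then show "walk_path x n = walk_path y n" by (simp add: walk_path_def)
qed

lemma bifurcation_ahead_along_fpath:
  "fpath Ed r s es \<Longrightarrow> s (hd es) = position x n \<Longrightarrow> bifurcation Ed s (r (last es))
    \<Longrightarrow> \<exists>n'\<ge>n. bifurcation Ed s (position x n')"
proof (induction es arbitrary: n)
  case (Cons e es)
  show ?case
  proof (cases "bifurcation Ed s (position x n)")
    case False
    have "e = walk_path x n"
      using out_edge_unique_if_not_bifurcation[OF False] Cons.prems(1,2) walk_path_edge
      by (simp add: fpath_Cons)
    then have next_position: "position x (Suc n) = r e" by (simp only: position_Suc)
    show ?thesis
    proof (cases "es = []")
      case True
      then show ?thesis using Cons.prems(3) next_position by (metis last_ConsL le_SucI order_refl)
    next
      case False
      then have "fpath Ed r s es" "s (hd es) = position x (Suc n)" "bifurcation Ed s (r (last es))"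
        using Cons.prems next_position by (auto simp: fpath_Cons)
      then obtain n' where "n' \<ge> Suc n" "bifurcation Ed s (position x n')"
        using Cons.IH by blast
      then show ?thesis by (meson Suc_leD)
    qed
  qed blast
qed (simp add: fpath_def)

lemma bifurcation_ahead: "\<exists>n'\<ge>n. bifurcation Ed s (position x n')"
proof -
  obtain w where "w \<in> T V Ed r s (position x n)" "bifurcation Ed s w"
    using reaches_bifurcation position_in_V by blast
  then show ?thesis
    using bifurcation_ahead_along_fpath by (auto simp: T_def)
qed

lemma bits_read_unbounded: "\<exists>n. k \<le> bits_read x n"
proof (induction k)
  case (Suc k)
  then obtain n where "k \<le> bits_read x n" by blast
  moreover obtain n' where "n \<le> n'" "bifurcation Ed s (position x n')"
    using bifurcation_ahead by blast
  moreover have "mono (bits_read x)"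
    by (simp add: mono_iff_le_Suc)
  ultimately have "Suc k \<le> bits_read x (Suc n')"
    by (auto dest: monoD[of _ n n'])
  then show ?case by blast
qed simp

text \<open>Since the counter grows by at most one per step, it passes through every value,
  and it can only leave the value k at a bifurcation.\<close>
lemma reads_every_bit: "\<exists>n. bits_read x n = k \<and> bifurcation Ed s (position x n)"
proof -
  obtain n where "Suc k \<le> bits_read x n" using bits_read_unbounded by blast
  then obtain j where "\<forall>i\<le>j. \<not> Suc k \<le> bits_read x i" "Suc k \<le> bits_read x (Suc j)"
    using ex_least_nat_less[of "\<lambda>n. Suc k \<le> bits_read x n"] by auto
  then have "bits_read x j = k" "bifurcation Ed s (position x j)"
    by (auto split: if_splits)
  then show ?thesis by blast
qed

lemma inj_walk_path: "inj walk_path"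
proof (rule injI)
  fix x y assume same_path: "walk_path x = walk_path y"
  have same_walk: "position x n = position y n \<and> bits_read x n = bits_read y n" for n
  proof (induction n)
    case (Suc n)
    then show ?case using fun_cong[OF same_path, of n] by (simp add: walk_path_def)
  qed simp
  show "x = y"
  proof
    fix k
    obtain n where "bits_read x n = k" "bifurcation Ed s (position x n)"
      using reads_every_bit by blast
    then have "out (position x n) (x k) = out (position x n) (y k)"
      using fun_cong[OF same_path, of n] same_walk[of n] by (simp add: walk_path_def)
    moreover have "out (position x n) True \<noteq> out (position x n) False"
      using out_branches position_in_V \<open>bifurcation Ed s (position x n)\<close> by blast
    ultimately show "x k = y k" by (cases "x k"; cases "y k") auto
  qed
qed

end

theorem lemma4p7:
  fixes V :: "'v set" and Ed :: "'e set" and r s :: "'e \<Rightarrow> 'v"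
  assumes "graph V Ed r s"
    and "V \<noteq> {}"
    and "\<not> (\<exists>es. is_cycle Ed r s es)"
    and "countable (boundary_paths V Ed r s // tail_equiv V Ed r s)"
  shows "\<exists>v\<in>V. line_point V Ed r s v"
proof (rule ccontr)
  assume no_line_point: "\<not> (\<exists>v\<in>V. line_point V Ed r s v)"
  have reach: "\<exists>w\<in>T V Ed r s u. bifurcation Ed s w" if "u \<in> V" for u
    using reaches_bifurcation_if_not_line_point[OF assms(3) that] no_line_point that by blast
  have emits: "\<exists>e\<in>Ed. s e = u" if "u \<in> V" for u
    using reach[OF that] by (blast intro: out_edge_if_reaches_bifurcation)
  obtain out where
    out_edge: "\<And>u b. u \<in> V \<Longrightarrow> out u b \<in> Ed \<and> s (out u b) = u" and
    out_branches: "\<And>u. u \<in> V \<Longrightarrow> bifurcation Ed s u \<Longrightarrow> out u True \<noteq> out u False"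
    using out_edge_selector_exists[OF emits] by blast
  obtain v0 where "v0 \<in> V" using assms(2) by blast
  with assms(1) reach out_edge out_branches
  interpret bifurcating_walk V Ed r s v0 out
    by unfold_locales
  have "uncountable (boundary_paths V Ed r s // tail_equiv V Ed r s)"
    by (rule uncountable_tail_classes_if_causal_inj_paths
        [OF ipath_walk_path inj_walk_path causal_walk_path])
  then show False using assms(4) by blast
qed

end
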